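(* Let $X,Y$ be continuous processes. Then $\int_0^\cdot X\,d^\circ Y$ exists if and only if the Lévy area $L(X,Y)$ exists, and in that case $2\int_0^tX\,d^\circ Y=X_tY_t-X_0Y_0+L(X,Y)_t$.
   Context: $T>0$; continuous functions are extended by $f(t)=f(0)$ for $t\le0$, $f(t)=f(T)$ for $t>T$. Limits are in the ucp sense: uniformly in $t\in[0,T]$, in probability, as $\varepsilon\to0^+$. The symmetric integral $\int_0^tX\,d^\circ Y$ is the ucp limit of $\int_0^tX(s)\frac{Y(s+\varepsilon)-Y(s-\varepsilon)}{2\varepsilon}ds$, and the Lévy area is $L(X,Y)_t=\lim_{\varepsilon\to0^+}\int_0^t\frac{X_sY_{s+\varepsilon}-X_{s+\varepsilon}Y_s}{\varepsilon}ds$ (ucp limit). *)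

theory Defs
  imports "HOL-Probability.Probability"
begin

definition ext :: "real \<Rightarrow> (real \<Rightarrow> 'a \<Rightarrow> real) \<Rightarrow> real \<Rightarrow> 'a \<Rightarrow> real" where
  "ext T X t \<omega> = X (max 0 (min T t)) \<omega>"

text \<open>ucp convergence as eps tends to 0 from the right: uniformly in t in [0,T], in (outer)
  probability.\<close>
definition ucp_conv :: "'a measure \<Rightarrow> real \<Rightarrow> (real \<Rightarrow> real \<Rightarrow> 'a \<Rightarrow> real)
    \<Rightarrow> (real \<Rightarrow> 'a \<Rightarrow> real) \<Rightarrow> bool" where
  "ucp_conv M T Z Z0 \<longleftrightarrow>
     (\<forall>\<delta>>0. \<forall>\<eta>>0. \<exists>e0>0. \<forall>\<epsilon>. 0 < \<epsilon> \<and> \<epsilon> < e0 \<longrightarrow>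
        (\<exists>A\<in>sets M. measure M A < \<eta> \<and>
           {\<omega>\<in>space M. \<exists>t\<in>{0..T}. \<bar>Z \<epsilon> t \<omega> - Z0 t \<omega>\<bar> > \<delta>} \<subseteq> A))"

definition sym_approx :: "real \<Rightarrow> (real \<Rightarrow> 'a \<Rightarrow> real) \<Rightarrow> (real \<Rightarrow> 'a \<Rightarrow> real)
    \<Rightarrow> real \<Rightarrow> real \<Rightarrow> 'a \<Rightarrow> real" where
  "sym_approx T X Y \<epsilon> t \<omega> = integral {0..t}
     (\<lambda>s. ext T X s \<omega> * (ext T Y (s + \<epsilon>) \<omega> - ext T Y (s - \<epsilon>) \<omega>) / (2 * \<epsilon>))"

definition levy_approx :: "real \<Rightarrow> (real \<Rightarrow> 'a \<Rightarrow> real) \<Rightarrow> (real \<Rightarrow> 'a \<Rightarrow> real)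
    \<Rightarrow> real \<Rightarrow> real \<Rightarrow> 'a \<Rightarrow> real" where
  "levy_approx T X Y \<epsilon> t \<omega> = integral {0..t}
     (\<lambda>s. (ext T X s \<omega> * ext T Y (s + \<epsilon>) \<omega> - ext T X (s + \<epsilon>) \<omega> * ext T Y s \<omega>) / \<epsilon>)"

definition is_sym_integral where
  "is_sym_integral M T X Y I \<longleftrightarrow> ucp_conv M T (sym_approx T X Y) I"

definition is_levy_area where
  "is_levy_area M T X Y L \<longleftrightarrow> ucp_conv M T (levy_approx T X Y) L"

definition continuous_process :: "'a measure \<Rightarrow> real \<Rightarrow> (real \<Rightarrow> 'a \<Rightarrow> real) \<Rightarrow> bool" where
  "continuous_process M T X \<longleftrightarrow>
     (\<forall>t\<in>{0..T}. X t \<in> borel_measurable M) \<and>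
     (\<forall>\<omega>\<in>space M. continuous_on {0..T} (\<lambda>t. X t \<omega>))"

end

theory Submission
  imports Defs
begin

text \<open>With \<open>g(s) = x(s) y(s - \<epsilon>)\<close>, the integrand of \<open>2 sym_approx - levy_approx\<close> is
  \<open>(g(s + \<epsilon>) - g(s)) / \<epsilon>\<close>, so pathwise \<open>2 sym_approx - levy_approx\<close> is the difference of the
  averages of \<open>g\<close> over \<open>[t, t + \<epsilon>]\<close> and \<open>[0, \<epsilon>]\<close>. By uniform continuity of the paths it tends to
  \<open>X\<^sub>t Y\<^sub>t - X\<^sub>0 Y\<^sub>0\<close> uniformly in \<open>t\<close> for every \<open>\<omega>\<close>; this is ucp convergence because the events
  where the deviation exceeds \<open>\<delta>\<close> lie in measurable events decreasing to the empty set as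
  \<open>\<epsilon> \<rightarrow> 0\<close>. As ucp limits are linear and almost surely unique, either approximation converges
  iff the other does, with the stated relation between the limits.\<close>

lemma integral_shift_difference:
  fixes g :: "real \<Rightarrow> real"
  assumes g: "continuous_on UNIV g" and "a \<le> b" "0 \<le> h"
  shows "integral {a..b} (\<lambda>s. g (s + h) - g s) = integral {b..b+h} g - integral {a..a+h} g"
proof -
  have int: "g integrable_on {c..d}" for c d
    using g by (auto intro: integrable_continuous_real continuous_on_subset)
  have "(\<lambda>s. g (s + h)) integrable_on {a..b}"
    using integrable_shift_real_ivl[OF int[of "a + h" "b + h"], of h] by simp
  then have "integral {a..b} (\<lambda>s. g (s + h) - g s) = integral {a+h..b+h} g - integral {a..b} g"
    using integral_diff[OF _ int] integral_shift_real_ivl[of "a + h" h "b + h" g] by simp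
  also have "\<dots> = integral {b..b+h} g - integral {a..a+h} g"
    using Henstock_Kurzweil_Integration.integral_combine[where a=a and c="a + h" and b="b + h", OF _ _ int]
      Henstock_Kurzweil_Integration.integral_combine[where a=a and c=b and b="b + h", OF _ _ int]
      assms(2,3) by simp
  finally show ?thesis .
qed

lemma integral_deviation_le:
  fixes g :: "real \<Rightarrow> real"
  assumes "continuous_on {a..b} g" "a \<le> b" "\<And>s. s \<in> {a..b} \<Longrightarrow> \<bar>g s - v\<bar> \<le> c"
  shows "\<bar>integral {a..b} g - (b - a) * v\<bar> \<le> c * (b - a)"
proof -
  have "integral {a..b} (\<lambda>s. g s - v) = integral {a..b} g - (b - a) * v"
    using assms(1,2) by (simp add: integral_diff integrable_continuous_real)
  moreover have "norm (integral {a..b} (\<lambda>s. g s - v)) \<le> c * (b - a)"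
    using assms by (intro integral_bound continuous_intros) auto
  ultimately show ?thesis by simp
qed

lemma two_sym_minus_levy_defect_le:
  fixes x y :: "real \<Rightarrow> real"
  assumes x: "continuous_on UNIV x" and y: "continuous_on UNIV y" and "0 < \<epsilon>" "0 \<le> t"
    and osc: "\<And>s u r. \<bar>s - r\<bar> \<le> \<epsilon> \<Longrightarrow> \<bar>u - r\<bar> \<le> \<epsilon> \<Longrightarrow> \<bar>x s * y u - x r * y r\<bar> \<le> c"
  shows "\<bar>2 * integral {0..t} (\<lambda>s. x s * (y (s + \<epsilon>) - y (s - \<epsilon>)) / (2 * \<epsilon>))
           - integral {0..t} (\<lambda>s. (x s * y (s + \<epsilon>) - x (s + \<epsilon>) * y s) / \<epsilon>)
           - (x t * y t - x 0 * y 0)\<bar> \<le> 2 * c"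
proof -
  let ?sym = "\<lambda>s. x s * (y (s + \<epsilon>) - y (s - \<epsilon>)) / (2 * \<epsilon>)"
  let ?levy = "\<lambda>s. (x s * y (s + \<epsilon>) - x (s + \<epsilon>) * y s) / \<epsilon>"
  define g where "g s = x s * y (s - \<epsilon>)" for s
  have g: "continuous_on UNIV g"
    unfolding g_def by (intro continuous_intros continuous_on_compose2[OF y] x) auto
  have int: "f integrable_on {0..t}" if "continuous_on UNIV f" for f :: "real \<Rightarrow> real"
    using that by (auto intro: integrable_continuous_real continuous_on_subset)
  have sym: "?sym integrable_on {0..t}" and levy: "?levy integrable_on {0..t}"
    using \<open>0 < \<epsilon>\<close> by (intro int continuous_intros continuous_on_compose2[OF x]
        continuous_on_compose2[OF y] x y; simp)+
  have "2 * integral {0..t} ?sym - integral {0..t} ?levy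
      = integral {0..t} (\<lambda>s. 2 * ?sym s - ?levy s)"
    by (simp only: integral_diff[OF integrable_on_mult_right[OF sym] levy] integral_mult_right)
  also have "\<dots> = integral {0..t} (\<lambda>s. (g (s + \<epsilon>) - g s) / \<epsilon>)"
    by (rule integral_cong) (use \<open>0 < \<epsilon>\<close> in \<open>simp add: g_def field_simps\<close>)
  also have "\<dots> = integral {0..t} (\<lambda>s. g (s + \<epsilon>) - g s) / \<epsilon>"
    by (rule integral_divide)
  also have "\<dots> = (integral {t..t+\<epsilon>} g - integral {0..\<epsilon>} g) / \<epsilon>"
    using integral_shift_difference[OF g, of 0 t \<epsilon>] assms(3,4) by simp
  finally have defect: "2 * integral {0..t} ?sym - integral {0..t} ?levy - (x t * y t - x 0 * y 0)
    = ((integral {t..t+\<epsilon>} g - \<epsilon> * (x t * y t)) - (integral {0..\<epsilon>} g - \<epsilon> * (x 0 * y 0))) / \<epsilon>"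
    using \<open>0 < \<epsilon>\<close> by (simp add: field_simps)
  have deviation: "\<bar>integral {a..a+\<epsilon>} g - \<epsilon> * (x a * y a)\<bar> \<le> c * \<epsilon>" for a
  proof -
    have "\<bar>g s - x a * y a\<bar> \<le> c" if "s \<in> {a..a+\<epsilon>}" for s
      unfolding g_def using that by (intro osc) auto
    then show ?thesis
      using integral_deviation_le[OF continuous_on_subset[OF g], of a "a + \<epsilon>"] \<open>0 < \<epsilon>\<close> by simp
  qed
  show ?thesis
    using deviation[of t] deviation[of 0] \<open>0 < \<epsilon>\<close> unfolding defect
    by (simp add: divide_le_eq abs_le_iff)
qed

definition deviation_event :: "'a measure \<Rightarrow> real \<Rightarrow> (real \<Rightarrow> 'a \<Rightarrow> real) \<Rightarrow> (real \<Rightarrow> 'a \<Rightarrow> real)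
    \<Rightarrow> real \<Rightarrow> 'a set" where
  "deviation_event M T Z W \<delta> = {\<omega>\<in>space M. \<exists>t\<in>{0..T}. \<delta> < \<bar>Z t \<omega> - W t \<omega>\<bar>}"

lemma ucp_conv_iff_eventually:
  "ucp_conv M T Z W \<longleftrightarrow> (\<forall>\<delta>>0. \<forall>\<eta>>0. \<forall>\<^sub>F \<epsilon> in at_right 0.
     \<exists>A\<in>sets M. measure M A < \<eta> \<and> deviation_event M T (Z \<epsilon>) W \<delta> \<subseteq> A)"
  unfolding ucp_conv_def deviation_event_def eventually_at_right_field by (simp add: imp_conjL)

lemma abs_lincomb_diff_le:
  fixes a b u v p q :: real
  shows "\<bar>a * u + b * v - (a * p + b * q)\<bar> \<le> \<bar>a\<bar> * \<bar>u - p\<bar> + \<bar>b\<bar> * \<bar>v - q\<bar>"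
  by (metis abs_mult abs_triangle_ineq right_diff_distrib add_diff_add)

lemma deviation_event_lincomb_subset:
  assumes "(\<bar>a\<bar> + \<bar>b\<bar>) * d \<le> \<delta>"
  shows "deviation_event M T (\<lambda>t \<omega>. a * Z t \<omega> + b * Z' t \<omega>) (\<lambda>t \<omega>. a * W t \<omega> + b * W' t \<omega>) \<delta>
    \<subseteq> deviation_event M T Z W d \<union> deviation_event M T Z' W' d"
proof
  fix \<omega> assume "\<omega> \<in> deviation_event M T (\<lambda>t \<omega>. a * Z t \<omega> + b * Z' t \<omega>) (\<lambda>t \<omega>. a * W t \<omega> + b * W' t \<omega>) \<delta>"
  then obtain t where \<omega>: "\<omega> \<in> space M" and "t \<in> {0..T}"
    and big: "\<delta> < \<bar>a * Z t \<omega> + b * Z' t \<omega> - (a * W t \<omega> + b * W' t \<omega>)\<bar>"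
    unfolding deviation_event_def by blast
  show "\<omega> \<in> deviation_event M T Z W d \<union> deviation_event M T Z' W' d"
  proof (rule ccontr)
    assume "\<not> ?thesis"
    then have "\<bar>Z t \<omega> - W t \<omega>\<bar> \<le> d" "\<bar>Z' t \<omega> - W' t \<omega>\<bar> \<le> d"
      using \<omega> \<open>t \<in> {0..T}\<close> unfolding deviation_event_def by (auto simp: not_less)
    then have "\<bar>a\<bar> * \<bar>Z t \<omega> - W t \<omega>\<bar> + \<bar>b\<bar> * \<bar>Z' t \<omega> - W' t \<omega>\<bar> \<le> (\<bar>a\<bar> + \<bar>b\<bar>) * d"
      by (simp add: distrib_right add_mono mult_left_mono)
    then show False
      using abs_lincomb_diff_le[of a "Z t \<omega>" b "Z' t \<omega>" "W t \<omega>" "W' t \<omega>"] big assms by linarith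
  qed
qed

lemma ucp_conv_lincomb:
  assumes "ucp_conv M T Z A" "ucp_conv M T Z' B"
  shows "ucp_conv M T (\<lambda>e t \<omega>. a * Z e t \<omega> + b * Z' e t \<omega>) (\<lambda>t \<omega>. a * A t \<omega> + b * B t \<omega>)"
  unfolding ucp_conv_iff_eventually
proof (intro allI impI)
  fix \<delta> \<eta> :: real assume "\<delta> > 0" "\<eta> > 0"
  define d where "d = \<delta> / (\<bar>a\<bar> + \<bar>b\<bar> + 1)"
  have "d > 0" and "(\<bar>a\<bar> + \<bar>b\<bar>) * d \<le> \<delta>"
    using \<open>\<delta> > 0\<close> by (auto simp: d_def field_simps)
  note subset = deviation_event_lincomb_subset[OF this(2)]
  have "\<forall>\<^sub>F \<epsilon> in at_right 0. \<exists>A'\<in>sets M. measure M A' < \<eta> / 2 \<and> deviation_event M T (Z \<epsilon>) A d \<subseteq> A'"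
    "\<forall>\<^sub>F \<epsilon> in at_right 0. \<exists>A'\<in>sets M. measure M A' < \<eta> / 2 \<and> deviation_event M T (Z' \<epsilon>) B d \<subseteq> A'"
    using assms[unfolded ucp_conv_iff_eventually, rule_format, OF \<open>d > 0\<close>, of "\<eta> / 2"] \<open>\<eta> > 0\<close>
    by auto
  then show "\<forall>\<^sub>F \<epsilon> in at_right 0. \<exists>A'\<in>sets M. measure M A' < \<eta> \<and> deviation_event M T
      (\<lambda>t \<omega>. a * Z \<epsilon> t \<omega> + b * Z' \<epsilon> t \<omega>) (\<lambda>t \<omega>. a * A t \<omega> + b * B t \<omega>) \<delta> \<subseteq> A'"
  proof eventually_elim
    case (elim \<epsilon>)
    then obtain A1 A2 where A1: "A1 \<in> sets M" "measure M A1 < \<eta> / 2" "deviation_event M T (Z \<epsilon>) A d \<subseteq> A1"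
      and A2: "A2 \<in> sets M" "measure M A2 < \<eta> / 2" "deviation_event M T (Z' \<epsilon>) B d \<subseteq> A2"
      by blast
    have "measure M (A1 \<union> A2) < \<eta>"
      using measure_Un_le[OF A1(1) A2(1)] A1(2) A2(2) by linarith
    moreover have "deviation_event M T (\<lambda>t \<omega>. a * Z \<epsilon> t \<omega> + b * Z' \<epsilon> t \<omega>)
        (\<lambda>t \<omega>. a * A t \<omega> + b * B t \<omega>) \<delta> \<subseteq> A1 \<union> A2"
      using subset[of M T "Z \<epsilon>" "Z' \<epsilon>" A B] A1(3) A2(3) by blast
    ultimately show ?case
      using A1(1) A2(1) by blast
  qed
qed

lemma AE_I_small_cover:
  assumes "finite_measure M"
    and cover: "\<And>\<eta>. \<eta> > 0 \<Longrightarrow> \<exists>A\<in>sets M. measure M A < \<eta> \<and> {\<omega>\<in>space M. \<not> P \<omega>} \<subseteq> A"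
  shows "AE \<omega> in M. P \<omega>"
proof -
  interpret finite_measure M by (rule assms(1))
  obtain A where A: "\<And>n. A n \<in> sets M" "\<And>n. measure M (A n) < inverse (real (Suc n))"
    "\<And>n. {\<omega>\<in>space M. \<not> P \<omega>} \<subseteq> A n"
    using cover[of "inverse (real (Suc _))"] by (metis of_nat_0_less_iff inverse_positive_iff_positive zero_less_Suc)
  have "measure M (\<Inter>n. A n) \<le> inverse (real (Suc n))" for n
  proof -
    have "measure M (\<Inter>n. A n) \<le> measure M (A n)"
      by (rule finite_measure_mono) (use A(1) in auto)
    then show ?thesis using A(2)[of n] by linarith
  qed
  then have "measure M (\<Inter>n. A n) \<le> 0"
    by (intro tendsto_lowerbound[OF LIMSEQ_inverse_real_of_nat]) auto
  then have "measure M (\<Inter>n. A n) = 0"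
    using measure_nonneg[of M "\<Inter>n. A n"] by linarith
  then have "(\<Inter>n. A n) \<in> null_sets M"
    using A(1) by (auto simp: emeasure_eq_measure null_sets_def)
  moreover have "{\<omega>\<in>space M. \<not> P \<omega>} \<subseteq> (\<Inter>n. A n)"
    using A(3) by blast
  ultimately show ?thesis by (rule AE_I')
qed

lemma ucp_conv_unique:
  assumes "finite_measure M" "ucp_conv M T Z A" "ucp_conv M T Z B"
  shows "AE \<omega> in M. \<forall>t\<in>{0..T}. A t \<omega> = B t \<omega>"
proof -
  have diff: "ucp_conv M T (\<lambda>e t \<omega>. 0) (\<lambda>t \<omega>. A t \<omega> - B t \<omega>)"
    using ucp_conv_lincomb[OF assms(2,3), of 1 "-1"] by simp
  have "AE \<omega> in M. \<forall>t\<in>{0..T}. \<bar>A t \<omega> - B t \<omega>\<bar> \<le> inverse (real (Suc k))" for k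
  proof (rule AE_I_small_cover)
    fix \<eta> :: real assume "\<eta> > 0"
    have "\<forall>\<^sub>F \<epsilon> in at_right (0::real). \<exists>A'\<in>sets M. measure M A' < \<eta> \<and>
        deviation_event M T (\<lambda>t \<omega>. 0) (\<lambda>t \<omega>. A t \<omega> - B t \<omega>) (inverse (real (Suc k))) \<subseteq> A'"
      using diff \<open>\<eta> > 0\<close> unfolding ucp_conv_iff_eventually by simp
    then show "\<exists>A'\<in>sets M. measure M A' < \<eta> \<and>
        {\<omega>\<in>space M. \<not> (\<forall>t\<in>{0..T}. \<bar>A t \<omega> - B t \<omega>\<bar> \<le> inverse (real (Suc k)))} \<subseteq> A'"
      by (auto simp: deviation_event_def not_le abs_minus_commute
          dest: eventually_happens'[OF trivial_limit_at_right_real])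
  qed (rule assms(1))
  then have "AE \<omega> in M. \<forall>k. \<forall>t\<in>{0..T}. \<bar>A t \<omega> - B t \<omega>\<bar> \<le> inverse (real (Suc k))"
    by (simp add: AE_all_countable)
  then show ?thesis
    by eventually_elim (metis reals_Archimedean zero_less_abs_iff eq_iff_diff_eq_0 not_le)
qed

lemma measure_shrinking_family_tendsto_0:
  fixes B :: "real \<Rightarrow> 'a set"
  assumes "finite_measure M" and sets: "\<And>e. B e \<in> sets M"
    and mono: "\<And>e e'. e \<le> e' \<Longrightarrow> B e \<subseteq> B e'"
    and shrink: "\<And>\<omega>. \<omega> \<in> space M \<Longrightarrow> \<exists>e>0. \<omega> \<notin> B e"
  shows "((\<lambda>e. measure M (B e)) \<longlongrightarrow> 0) (at_right 0)"
proof -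
  interpret finite_measure M by (rule assms(1))
  let ?Bn = "\<lambda>n. B (inverse (real (Suc n)))"
  have "(\<lambda>n. measure M (?Bn n)) \<longlonglongrightarrow> measure M (\<Inter>n. ?Bn n)"
    using sets by (intro finite_Lim_measure_decseq) (auto simp: decseq_def intro!: mono)
  moreover have "(\<Inter>n. ?Bn n) = {}"
  proof -
    have "\<omega> \<notin> (\<Inter>n. ?Bn n)" if \<omega>: "\<omega> \<in> space M" for \<omega>
    proof -
      obtain e where "e > 0" "\<omega> \<notin> B e" using shrink[OF \<omega>] by blast
      moreover obtain n where "inverse (real (Suc n)) < e" using reals_Archimedean[OF \<open>e > 0\<close>] by blast
      ultimately show ?thesis using mono[of "inverse (real (Suc n))" e] by auto
    qed
    then show ?thesis using sets.sets_into_space[OF sets] by blast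
  qed
  ultimately have seq: "(\<lambda>n. measure M (?Bn n)) \<longlonglongrightarrow> 0" by simp
  show ?thesis
  proof (rule decreasing_tendsto)
    fix \<eta> :: real assume "0 < \<eta>"
    obtain N where N: "measure M (?Bn N) < \<eta>"
      using eventually_happens'[OF _ order_tendstoD(2)[OF seq \<open>0 < \<eta>\<close>]] by auto
    have "measure M (B e) < \<eta>" if "e < inverse (real (Suc N))" for e
      using finite_measure_mono[OF mono sets, of e "inverse (real (Suc N))"] that N by linarith
    then show "\<forall>\<^sub>F e in at_right 0. measure M (B e) < \<eta>"
      unfolding eventually_at_right_field by (auto intro: exI[of _ "inverse (real (Suc N))"])
  qed simp
qed

lemma continuous_exceeds_at_nearby_rat:
  fixes h :: "real \<Rightarrow> real"
  assumes "continuous_on UNIV h" "c < h a" "0 < \<rho>"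
  shows "\<exists>q\<in>\<rat>. \<bar>q - a\<bar> < \<rho> \<and> c < h q"
proof -
  obtain d where "d > 0" and d: "\<forall>a'. dist a' a < d \<longrightarrow> dist (h a') (h a) < h a - c"
    using assms(1,2) unfolding continuous_on_iff by (metis UNIV_I diff_gt_0_iff_gt)
  obtain q where q: "q \<in> \<rat>" "a < q" "q < a + min d \<rho>"
    using Rats_dense_in_real[of a "a + min d \<rho>"] \<open>d > 0\<close> assms(3) by auto
  then have "\<bar>h q - h a\<bar> < h a - c" using d by (simp add: dist_real_def)
  then show ?thesis using q by (intro bexI[of _ q]) auto
qed

text \<open>Sampling at rational times makes the corresponding event in \<open>\<omega>\<close> a countable union, hence
  measurable; for continuous paths this only costs a factor 2 in the radius.\<close>
definition diag_osc_exceeds_at_rats :: "(real \<Rightarrow> real) \<Rightarrow> (real \<Rightarrow> real) \<Rightarrow> real \<Rightarrow> real \<Rightarrow> bool" where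
  "diag_osc_exceeds_at_rats x y e c \<longleftrightarrow> (\<exists>q1\<in>\<rat>. \<exists>q2\<in>\<rat>. \<exists>q3\<in>\<rat>.
     \<bar>q1 - q3\<bar> < e \<and> \<bar>q2 - q3\<bar> < e \<and> c < \<bar>x q1 * y q2 - x q3 * y q3\<bar>)"

lemma diag_osc_exceeds_at_rats_mono:
  "diag_osc_exceeds_at_rats x y e c \<Longrightarrow> e \<le> e' \<Longrightarrow> diag_osc_exceeds_at_rats x y e' c"
  unfolding diag_osc_exceeds_at_rats_def by (meson less_le_trans)

lemma diag_osc_exceeds_at_ratsI:
  fixes x y :: "real \<Rightarrow> real"
  assumes x: "continuous_on UNIV x" and y: "continuous_on UNIV y" and "0 < \<epsilon>"
    and "\<bar>s - r\<bar> \<le> \<epsilon>" "\<bar>u - r\<bar> \<le> \<epsilon>" "c < \<bar>x s * y u - x r * y r\<bar>"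
  shows "diag_osc_exceeds_at_rats x y (2 * \<epsilon>) c"
proof -
  have "\<epsilon> / 2 > 0" using \<open>0 < \<epsilon>\<close> by simp
  have h1: "continuous_on UNIV (\<lambda>a. \<bar>x a * y u - x r * y r\<bar>)"
    by (intro continuous_intros x)
  obtain q1 where q1: "q1 \<in> \<rat>" "\<bar>q1 - s\<bar> < \<epsilon> / 2" "c < \<bar>x q1 * y u - x r * y r\<bar>"
    using continuous_exceeds_at_nearby_rat[OF h1 assms(6) \<open>\<epsilon> / 2 > 0\<close>] by blast
  have h2: "continuous_on UNIV (\<lambda>a. \<bar>x q1 * y a - x r * y r\<bar>)"
    by (intro continuous_intros y)
  obtain q2 where q2: "q2 \<in> \<rat>" "\<bar>q2 - u\<bar> < \<epsilon> / 2" "c < \<bar>x q1 * y q2 - x r * y r\<bar>"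
    using continuous_exceeds_at_nearby_rat[OF h2 q1(3) \<open>\<epsilon> / 2 > 0\<close>] by blast
  have h3: "continuous_on UNIV (\<lambda>a. \<bar>x q1 * y q2 - x a * y a\<bar>)"
    by (intro continuous_intros x y)
  obtain q3 where q3: "q3 \<in> \<rat>" "\<bar>q3 - r\<bar> < \<epsilon> / 2" "c < \<bar>x q1 * y q2 - x q3 * y q3\<bar>"
    using continuous_exceeds_at_nearby_rat[OF h3 q2(3) \<open>\<epsilon> / 2 > 0\<close>] by blast
  show ?thesis
    unfolding diag_osc_exceeds_at_rats_def
  proof (intro bexI conjI)
    show "\<bar>q1 - q3\<bar> < 2 * \<epsilon>" "\<bar>q2 - q3\<bar> < 2 * \<epsilon>"
      using q1(2) q2(2) q3(2) assms(4,5) by linarith+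
  qed (fact q1 q2 q3)+
qed

lemma sets_diag_osc_exceeds_at_rats:
  assumes "\<And>t. (\<lambda>\<omega>. x \<omega> t) \<in> borel_measurable M" "\<And>t. (\<lambda>\<omega>. y \<omega> t) \<in> borel_measurable M"
  shows "{\<omega>\<in>space M. diag_osc_exceeds_at_rats (x \<omega>) (y \<omega>) e c} \<in> sets M"
proof -
  have "{\<omega>\<in>space M. \<bar>q1 - q3\<bar> < e \<and> \<bar>q2 - q3\<bar> < e \<and>
      c < \<bar>x \<omega> q1 * y \<omega> q2 - x \<omega> q3 * y \<omega> q3\<bar>} \<in> sets M" for q1 q2 q3
    using assms by measurable
  then show ?thesis
    unfolding diag_osc_exceeds_at_rats_def
    by (intro sets.sets_Collect_countable_Ex' countable_rat)
qed

lemma ext_eq [simp]: "t \<in> {0..T} \<Longrightarrow> ext T X t \<omega> = X t \<omega>"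
  by (simp add: ext_def)

lemma continuous_on_ext:
  assumes "0 \<le> T" "continuous_on {0..T} (\<lambda>t. X t \<omega>)"
  shows "continuous_on UNIV (\<lambda>t. ext T X t \<omega>)"
  unfolding ext_def
  by (rule continuous_on_compose2[OF assms(2)]) (use assms(1) in \<open>auto intro!: continuous_intros\<close>)

lemma measurable_ext:
  assumes "0 \<le> T" "\<And>t. t \<in> {0..T} \<Longrightarrow> X t \<in> borel_measurable M"
  shows "(\<lambda>\<omega>. ext T X t \<omega>) \<in> borel_measurable M"
  unfolding ext_def using assms by simp

lemma ext_product_near_diagonal:
  assumes "0 \<le> T" "continuous_on {0..T} (\<lambda>t. X t \<omega>)" "continuous_on {0..T} (\<lambda>t. Y t \<omega>)" "0 < c"
  shows "\<exists>d>0. \<forall>s u r. \<bar>s - r\<bar> < d \<longrightarrow> \<bar>u - r\<bar> < d \<longrightarrow>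
           \<bar>ext T X s \<omega> * ext T Y u \<omega> - ext T X r \<omega> * ext T Y r \<omega>\<bar> < c"
proof -
  let ?S = "{0..T} \<times> {0..T}"
  have "continuous_on ?S (\<lambda>p. X (fst p) \<omega> * Y (snd p) \<omega>)"
    by (intro continuous_intros continuous_on_compose2[OF assms(2)] continuous_on_compose2[OF assms(3)])
      auto
  then have "uniformly_continuous_on ?S (\<lambda>p. X (fst p) \<omega> * Y (snd p) \<omega>)"
    by (intro compact_uniformly_continuous compact_Times) auto
  then obtain d where "d > 0" and d: "\<forall>p\<in>?S. \<forall>p'\<in>?S. dist p' p < d \<longrightarrow>
      dist (X (fst p') \<omega> * Y (snd p') \<omega>) (X (fst p) \<omega> * Y (snd p) \<omega>) < c"
    using \<open>0 < c\<close> unfolding uniformly_continuous_on_def by metis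
  define cl where "cl t = max 0 (min T t)" for t
  have cl: "cl t \<in> {0..T}" "\<bar>cl t - cl t'\<bar> \<le> \<bar>t - t'\<bar>" "ext T Z t \<omega> = Z (cl t) \<omega>"
    for t t' and Z :: "real \<Rightarrow> 'a \<Rightarrow> real"
    using assms(1) by (auto simp: cl_def ext_def max_def min_def abs_if)
  show ?thesis
  proof (intro exI[of _ "d / 2"] allI impI conjI)
    fix s u r :: real assume "\<bar>s - r\<bar> < d / 2" "\<bar>u - r\<bar> < d / 2"
    then have "dist (cl s, cl u) (cl r, cl r) < d"
      using sqrt_sum_squares_le_sum_abs[of "cl s - cl r" "cl u - cl r"] cl(2)[of s r] cl(2)[of u r]
      by (simp add: dist_Pair_Pair dist_real_def)
    then show "\<bar>ext T X s \<omega> * ext T Y u \<omega> - ext T X r \<omega> * ext T Y r \<omega>\<bar> < c"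
      using d[rule_format, of "(cl r, cl r)" "(cl s, cl u)"] cl(1)
      by (simp add: cl(3) dist_real_def)
  qed (use \<open>d > 0\<close> in simp)
qed

lemma ext_not_diag_osc_exceeds_at_rats:
  assumes "0 \<le> T" "continuous_on {0..T} (\<lambda>t. X t \<omega>)" "continuous_on {0..T} (\<lambda>t. Y t \<omega>)" "0 < c"
  shows "\<exists>e>0. \<not> diag_osc_exceeds_at_rats (\<lambda>s. ext T X s \<omega>) (\<lambda>s. ext T Y s \<omega>) e c"
  using ext_product_near_diagonal[where X = X and Y = Y and \<omega> = \<omega>, OF assms]
  unfolding diag_osc_exceeds_at_rats_def by (meson less_asym)

lemma deviation_event_two_sym_minus_levy_subset:
  assumes "0 \<le> T" "continuous_process M T X" "continuous_process M T Y" "0 < \<epsilon>"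
  shows "deviation_event M T (\<lambda>t \<omega>. 2 * sym_approx T X Y \<epsilon> t \<omega> - levy_approx T X Y \<epsilon> t \<omega>)
      (\<lambda>t \<omega>. X t \<omega> * Y t \<omega> - X 0 \<omega> * Y 0 \<omega>) \<delta>
    \<subseteq> {\<omega>\<in>space M. diag_osc_exceeds_at_rats (\<lambda>s. ext T X s \<omega>) (\<lambda>s. ext T Y s \<omega>) (2 * \<epsilon>) (\<delta> / 2)}"
    (is "_ \<subseteq> {\<omega>\<in>space M. diag_osc_exceeds_at_rats (?x \<omega>) (?y \<omega>) _ _}")
proof (unfold deviation_event_def, safe, rule ccontr)
  fix \<omega> t assume \<omega>: "\<omega> \<in> space M" and "t \<in> {0..T}"
    and not_exceeds: "\<not> diag_osc_exceeds_at_rats (?x \<omega>) (?y \<omega>) (2 * \<epsilon>) (\<delta> / 2)"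
    and big: "\<delta> < \<bar>2 * sym_approx T X Y \<epsilon> t \<omega> - levy_approx T X Y \<epsilon> t \<omega>
      - (X t \<omega> * Y t \<omega> - X 0 \<omega> * Y 0 \<omega>)\<bar>"
  have cont: "continuous_on UNIV (?x \<omega>)" "continuous_on UNIV (?y \<omega>)"
    using assms(2,3) \<omega> unfolding continuous_process_def
    by (auto intro!: continuous_on_ext[OF assms(1)])
  have osc: "\<bar>?x \<omega> s * ?y \<omega> u - ?x \<omega> r * ?y \<omega> r\<bar> \<le> \<delta> / 2"
    if "\<bar>s - r\<bar> \<le> \<epsilon>" "\<bar>u - r\<bar> \<le> \<epsilon>" for s u r
    using diag_osc_exceeds_at_ratsI[OF cont \<open>0 < \<epsilon>\<close> that, of "\<delta> / 2"] not_exceeds by linarith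
  have "0 \<le> t" using \<open>t \<in> {0..T}\<close> by simp
  from two_sym_minus_levy_defect_le[OF cont \<open>0 < \<epsilon>\<close> this osc]
  show False using big \<open>t \<in> {0..T}\<close> assms(1)
    unfolding sym_approx_def levy_approx_def by simp
qed

lemma ucp_conv_two_sym_approx_minus_levy_approx:
  assumes "finite_measure M" "0 \<le> T" "continuous_process M T X" "continuous_process M T Y"
  shows "ucp_conv M T (\<lambda>e t \<omega>. 2 * sym_approx T X Y e t \<omega> - levy_approx T X Y e t \<omega>)
           (\<lambda>t \<omega>. X t \<omega> * Y t \<omega> - X 0 \<omega> * Y 0 \<omega>)"
  unfolding ucp_conv_iff_eventually
proof (intro allI impI)
  fix \<delta> \<eta> :: real assume "0 < \<delta>" "0 < \<eta>"
  define B where "B e = {\<omega>\<in>space M.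
    diag_osc_exceeds_at_rats (\<lambda>s. ext T X s \<omega>) (\<lambda>s. ext T Y s \<omega>) (2 * e) (\<delta> / 2)}" for e
  have B: "B e \<in> sets M" for e
    unfolding B_def using assms(2-4)
    by (intro sets_diag_osc_exceeds_at_rats measurable_ext) (auto simp: continuous_process_def)
  have "((\<lambda>e. measure M (B e)) \<longlongrightarrow> 0) (at_right 0)"
  proof (rule measure_shrinking_family_tendsto_0[OF assms(1) B])
    show "B e \<subseteq> B e'" if "e \<le> e'" for e e'
      unfolding B_def using that by (auto elim: diag_osc_exceeds_at_rats_mono)
    fix \<omega> assume "\<omega> \<in> space M"
    then obtain d where "d > 0"
      and "\<not> diag_osc_exceeds_at_rats (\<lambda>s. ext T X s \<omega>) (\<lambda>s. ext T Y s \<omega>) d (\<delta> / 2)"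
      using assms(3,4) \<open>0 < \<delta>\<close>
        ext_not_diag_osc_exceeds_at_rats[where X = X and Y = Y and \<omega> = \<omega> and c = "\<delta> / 2", OF assms(2)]
      unfolding continuous_process_def by auto
    then show "\<exists>e>0. \<omega> \<notin> B e"
      unfolding B_def by (intro exI[of _ "d / 2"]) auto
  qed
  then have "\<forall>\<^sub>F e in at_right 0. measure M (B e) < \<eta>"
    using \<open>0 < \<eta>\<close> by (rule order_tendstoD(2))
  moreover have "\<forall>\<^sub>F \<epsilon> in at_right 0. deviation_event M T
      (\<lambda>t \<omega>. 2 * sym_approx T X Y \<epsilon> t \<omega> - levy_approx T X Y \<epsilon> t \<omega>)
      (\<lambda>t \<omega>. X t \<omega> * Y t \<omega> - X 0 \<omega> * Y 0 \<omega>) \<delta> \<subseteq> B \<epsilon>"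
    using eventually_at_right_less unfolding B_def
    by eventually_elim (rule deviation_event_two_sym_minus_levy_subset[OF assms(2-4)])
  ultimately show "\<forall>\<^sub>F \<epsilon> in at_right 0. \<exists>A\<in>sets M. measure M A < \<eta> \<and> deviation_event M T
      (\<lambda>t \<omega>. 2 * sym_approx T X Y \<epsilon> t \<omega> - levy_approx T X Y \<epsilon> t \<omega>)
      (\<lambda>t \<omega>. X t \<omega> * Y t \<omega> - X 0 \<omega> * Y 0 \<omega>) \<delta> \<subseteq> A"
    by eventually_elim (use B in blast)
qed

theorem proposition4p8:
  fixes M :: "'a measure" and T :: real and X Y :: "real \<Rightarrow> 'a \<Rightarrow> real"
  assumes "prob_space M" and "T > 0"
    and "continuous_process M T X" and "continuous_process M T Y"
  shows "((\<exists>I. is_sym_integral M T X Y I) \<longleftrightarrow> (\<exists>L. is_levy_area M T X Y L))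
    \<and> (\<forall>I L. is_sym_integral M T X Y I \<and> is_levy_area M T X Y L \<longrightarrow>
         (AE \<omega> in M. \<forall>t\<in>{0..T}.
            2 * I t \<omega> = X t \<omega> * Y t \<omega> - X 0 \<omega> * Y 0 \<omega> + L t \<omega>))"
proof -
  let ?S = "sym_approx T X Y" and ?L = "levy_approx T X Y"
  let ?d = "\<lambda>t \<omega>. X t \<omega> * Y t \<omega> - X 0 \<omega> * Y 0 \<omega>"
  have fin: "finite_measure M"
    using assms(1) by (rule prob_space.finite_measure)
  have D: "ucp_conv M T (\<lambda>e t \<omega>. 2 * ?S e t \<omega> - ?L e t \<omega>) ?d"
    using ucp_conv_two_sym_approx_minus_levy_approx[OF fin _ assms(3,4)] assms(2) by simp
  have levy: "ucp_conv M T ?L (\<lambda>t \<omega>. 2 * I t \<omega> - ?d t \<omega>)" if "ucp_conv M T ?S I" for I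
    using ucp_conv_lincomb[OF that D, of 2 "-1"] by (simp add: algebra_simps)
  have sym: "ucp_conv M T ?S (\<lambda>t \<omega>. (L t \<omega> + ?d t \<omega>) / 2)" if "ucp_conv M T ?L L" for L
    using ucp_conv_lincomb[OF that D, of "1/2" "1/2"] by (simp add: field_simps)
  have relation: "AE \<omega> in M. \<forall>t\<in>{0..T}. 2 * I t \<omega> - L t \<omega> = ?d t \<omega>"
    if "ucp_conv M T ?S I" "ucp_conv M T ?L L" for I L
    using ucp_conv_unique[OF fin _ D] ucp_conv_lincomb[OF that, of 2 "-1"] by simp
  show ?thesis
    unfolding is_sym_integral_def is_levy_area_def
  proof (intro conjI allI impI iffI)
    show "\<exists>L. ucp_conv M T ?L L" if "\<exists>I. ucp_conv M T ?S I" using that levy by blast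
    show "\<exists>I. ucp_conv M T ?S I" if "\<exists>L. ucp_conv M T ?L L" using that sym by blast
    fix I L assume "ucp_conv M T ?S I \<and> ucp_conv M T ?L L"
    then have "AE \<omega> in M. \<forall>t\<in>{0..T}. 2 * I t \<omega> - L t \<omega> = ?d t \<omega>"
      using relation by blast
    then show "AE \<omega> in M. \<forall>t\<in>{0..T}. 2 * I t \<omega> = ?d t \<omega> + L t \<omega>"
      by (rule eventually_mono) auto
  qed
qed

end
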